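(* For all integers $k,n\ge 0$, $$\sum_{i=0}^{n}\sum_{j=0}^{n-i}(-1)^i\binom{n-i}{j}\binom{k}{i}\binom{k}{j}=1.$$ *)

theory Defs
  imports Main
begin

end

theory Submission
  imports Defs "HOL-Computational_Algebra.Formal_Power_Series"
begin

text \<open>Summing over \<open>j\<close> first, Vandermonde's identity turns the double sum into
  \<open>\<Sum>i. (-1)^i C(k,i) C(k+n-i, n-i)\<close>. Since \<open>C(k+m, m) = (-1)^m C(-k-1, m)\<close>, this is
  \<open>(-1)^n\<close> times the Vandermonde convolution of the rows \<open>k\<close> and \<open>-k-1\<close>, that is
  \<open>(-1)^n C(-1, n) = 1\<close>: the coefficient of \<open>x^n\<close> in \<open>(1-x)^k (1-x)^(-k-1) = (1-x)^(-1)\<close>.\<close>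

lemma sum_choose_mult_choose:
  "(\<Sum>j=0..m. (m choose j) * (k choose j)) = (k + m) choose m"
proof -
  have "(\<Sum>j=0..m. (m choose j) * (k choose j)) = (\<Sum>j=0..m. (k choose j) * (m choose (m - j)))"
    by (rule sum.cong) (auto simp: binomial_symmetric[symmetric])
  also have "\<dots> = (k + m) choose m"
    by (rule binomial_Vandermonde)
  finally show ?thesis .
qed

lemma binomial_add_eq_gbinomial_negated:
  "(of_nat ((k + m) choose m) :: 'a :: field_char_0) = (-1) ^ m * ((- of_nat k - 1) gchoose m)"
proof -
  have "(of_nat ((k + m) choose m) :: 'a) = (-1) ^ m * ((of_nat m - of_nat (k + m) - 1) gchoose m)"
    by (simp only: binomial_gbinomial flip: gbinomial_negated_upper)
  also have "(of_nat m - of_nat (k + m) - 1 :: 'a) = - of_nat k - 1"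
    by simp
  finally show ?thesis .
qed

lemma gbinomial_minus_one: "((-1 :: 'a :: field_char_0) gchoose n) = (-1) ^ n"
  using gbinomial_minus[of "1 :: 'a" n] by (simp flip: binomial_gbinomial)

lemma alternating_sum_binomial_mult_binomial_add:
  "(\<Sum>i=0..n. (-1::int) ^ i * int (k choose i) * int ((k + (n - i)) choose (n - i))) = 1"
proof -
  have "(\<Sum>i=0..n. (-1::real) ^ i * real (k choose i) * real ((k + (n - i)) choose (n - i)))
      = (\<Sum>i=0..n. (-1) ^ n * ((of_nat k gchoose i) * ((- of_nat k - 1) gchoose (n - i))))"
  proof (rule sum.cong)
    fix i assume "i \<in> {0..n}"
    then have sign: "(-1::real) ^ i * (-1) ^ (n - i) = (-1) ^ n"
      by (simp flip: power_add)
    have "(-1::real) ^ i * real (k choose i) * real ((k + (n - i)) choose (n - i))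
        = ((-1) ^ i * (-1) ^ (n - i)) * ((of_nat k gchoose i) * ((- of_nat k - 1) gchoose (n - i)))"
      unfolding binomial_add_eq_gbinomial_negated unfolding binomial_gbinomial by (simp only: mult_ac)
    then show "(-1::real) ^ i * real (k choose i) * real ((k + (n - i)) choose (n - i))
        = (-1) ^ n * ((of_nat k gchoose i) * ((- of_nat k - 1) gchoose (n - i)))"
      by (simp only: sign)
  qed simp
  also have "\<dots> = (-1) ^ n * ((of_nat k + (- of_nat k - 1)) gchoose n)"
    by (simp add: sum_distrib_left[symmetric] gbinomial_Vandermonde)
  also have "\<dots> = 1"
    by (simp add: gbinomial_minus_one flip: power_add)
  finally have "real_of_int (\<Sum>i=0..n. (-1::int) ^ i * int (k choose i) * int ((k + (n - i)) choose (n - i))) = 1"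
    by simp
  then show ?thesis
    by linarith
qed

theorem corollary3p4:
  fixes k n :: nat
  shows "(\<Sum>i=0..n. \<Sum>j=0..n-i. (-1::int)^i * int ((n-i) choose j) * int (k choose i) * int (k choose j)) = 1"
proof -
  have "(\<Sum>i=0..n. \<Sum>j=0..n-i. (-1::int)^i * int ((n-i) choose j) * int (k choose i) * int (k choose j))
      = (\<Sum>i=0..n. (-1::int)^i * int (k choose i) * int (\<Sum>j=0..n-i. ((n-i) choose j) * (k choose j)))"
    by (simp add: sum_distrib_left of_nat_sum mult_ac)
  also have "\<dots> = (\<Sum>i=0..n. (-1::int)^i * int (k choose i) * int ((k + (n-i)) choose (n-i)))"
    by (simp add: sum_choose_mult_choose)
  also have "\<dots> = 1"
    by (rule alternating_sum_binomial_mult_binomial_add)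
  finally show ?thesis .
qed

end
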